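(* Let $p\in(0,1)$. For $n\ge1$, let $X_n$ be the maximum weight of a directed path from $1$ to $n$ in the transitive tournament on $\{1,\ldots,n\}$ with independent $\mathrm{Bernoulli}(p)$ edge weights. Let $f(n)=\mathbb{E}[X_n]$ for $n\ge1$, and $f(0)=0$ (so $f(0)=f(1)=0$). Then for every $n\ge1$, \[ f(n)=\sum_{i=2}^{n}\big(1-(1-p)^{i-1}\big)(1-p)^{\binom{i-1}{2}}\big(f(n-i+1)+1\big). \]
   Context: The transitive tournament on $\{1,\ldots,n\}$ has a directed edge $(i,j)$ for every $1\le i<j\le n$. Each edge independently has weight $1$ with probability $p$ and weight $0$ otherwise. The weight of a path is the sum of its edge weights. $\binom{0}{2}=\binom{1}{2}=0$. *)

theory Defs
  imports "HOL-Probability.Probability"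
begin

definition tt_edges :: "nat \<Rightarrow> (nat \<times> nat) set" where
  "tt_edges n = {(i, j). 1 \<le> i \<and> i < j \<and> j \<le> n}"

text \<open>Random edge weights: independent Bernoulli(p) for every edge (True = weight 1);
  off the edge set the value is fixed to False.\<close>
definition weight_pmf :: "real \<Rightarrow> nat \<Rightarrow> (nat \<times> nat \<Rightarrow> bool) pmf" where
  "weight_pmf p n = Pi_pmf (tt_edges n) False (\<lambda>_. bernoulli_pmf p)"

definition tt_paths :: "nat \<Rightarrow> nat list set" where
  "tt_paths n = {xs. xs \<noteq> [] \<and> hd xs = 1 \<and> last xs = n \<and> sorted_wrt (<) xs \<and> set xs \<subseteq> {1..n}}"

definition path_weight :: "(nat \<times> nat \<Rightarrow> bool) \<Rightarrow> nat list \<Rightarrow> nat" where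
  "path_weight w xs = sum_list (map (\<lambda>e. if w e then 1 else 0) (zip xs (tl xs)))"

definition max_path_weight :: "(nat \<times> nat \<Rightarrow> bool) \<Rightarrow> nat \<Rightarrow> nat" where
  "max_path_weight w n = Max (path_weight w ` tt_paths n)"

definition f_exp :: "real \<Rightarrow> nat \<Rightarrow> real" where
  "f_exp p n = (if n = 0 then 0
     else measure_pmf.expectation (weight_pmf p n) (\<lambda>w. real (max_path_weight w n)))"

end

theory Submission
  imports Defs
begin

(* Let T be the least vertex entered by an edge of weight 1. A path from 1 collects nothing
   before it reaches a vertex >= T, so X_n = 1 + (maximum weight of a path from T to n), where
   the 1 is attained by the weight-1 edge into T; if T does not exist, X_n = 0. The event
   T = i is determined by the edges inside {1..i}; it says that the (i-1 choose 2) edges inside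
   {1..i-1} have weight 0 and not all i - 1 edges into i do. The maximum weight of a path from
   i to n is determined by the edges inside {i..n}, hence independent of that event, and is
   distributed like X_(n-i+1). *)

lemma path_weight_Nil [simp]: "path_weight w [] = 0"
  and path_weight_singleton [simp]: "path_weight w [x] = 0"
  and path_weight_Cons_Cons [simp]:
    "path_weight w (x # y # zs) = of_bool (w (x, y)) + path_weight w (y # zs)"
  by (simp_all add: path_weight_def)

lemma path_weight_cong:
  assumes "\<And>e. e \<in> set (zip xs (tl xs)) \<Longrightarrow> w e = w' e"
  shows "path_weight w xs = path_weight w' xs"
  using assms unfolding path_weight_def by (intro arg_cong[where f = sum_list] map_cong) auto

lemma path_weight_eq_0:
  assumes "\<And>e. e \<in> set (zip xs (tl xs)) \<Longrightarrow> \<not> w e"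
  shows "path_weight w xs = 0"
  using assms unfolding path_weight_def by (auto simp: sum_list_eq_0_iff)

lemma path_weight_map_add:
  "path_weight w (map (\<lambda>v. v + c) xs) = path_weight (\<lambda>(u, v). w (u + c, v + c)) xs"
  by (induction xs rule: induct_list012) auto

definition interval_edges :: "nat \<Rightarrow> nat \<Rightarrow> (nat \<times> nat) set" where
  "interval_edges a n = {(u, v). a \<le> u \<and> u < v \<and> v \<le> n}"

lemma tt_edges_eq_interval_edges: "tt_edges n = interval_edges 1 n"
  by (simp add: tt_edges_def interval_edges_def)

lemma interval_edges_mono: "a' \<le> a \<Longrightarrow> n \<le> n' \<Longrightarrow> interval_edges a n \<subseteq> interval_edges a' n'"
  by (auto simp: interval_edges_def)

lemma finite_interval_edges [simp]: "finite (interval_edges a n)"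
  by (rule finite_subset[of _ "{a..n} \<times> {a..n}"]) (auto simp: interval_edges_def)

lemma finite_tt_edges [simp]: "finite (tt_edges n)"
  by (simp add: tt_edges_eq_interval_edges)

definition paths_between :: "nat \<Rightarrow> nat \<Rightarrow> nat list set" where
  "paths_between a n =
     {xs. xs \<noteq> [] \<and> hd xs = a \<and> last xs = n \<and> sorted_wrt (<) xs \<and> set xs \<subseteq> {a..n}}"

definition max_weight_between :: "(nat \<times> nat \<Rightarrow> bool) \<Rightarrow> nat \<Rightarrow> nat \<Rightarrow> nat" where
  "max_weight_between w a n = Max (path_weight w ` paths_between a n)"

lemma max_path_weight_eq_max_weight_between: "max_path_weight w n = max_weight_between w 1 n"
  by (simp add: max_path_weight_def max_weight_between_def tt_paths_def paths_between_def)

lemma finite_paths_between: "finite (paths_between a n)"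
proof -
  have "paths_between a n \<subseteq> {xs. set xs \<subseteq> {a..n} \<and> length xs \<le> card {a..n}}"
  proof
    fix xs assume "xs \<in> paths_between a n"
    then have "set xs \<subseteq> {a..n}" "distinct xs"
      by (auto simp: paths_between_def strict_sorted_iff)
    then show "xs \<in> {xs. set xs \<subseteq> {a..n} \<and> length xs \<le> card {a..n}}"
      using distinct_card[of xs] card_mono[of "{a..n}" "set xs"] by simp
  qed
  then show ?thesis
    using finite_lists_length_le[of "{a..n}"] finite_subset by blast
qed

lemma Cons_in_paths_between:
  "ys \<in> paths_between b n \<Longrightarrow> a < b \<Longrightarrow> a # ys \<in> paths_between a n"
  by (cases ys) (auto simp: paths_between_def)

lemma edges_subset_interval_edges:
  "xs \<in> paths_between a n \<Longrightarrow> set (zip xs (tl xs)) \<subseteq> interval_edges a n"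
proof (induction xs arbitrary: a rule: induct_list012)
  case (3 x y zs)
  then have "y # zs \<in> paths_between y n" "x = a" "a < y" "y \<le> n"
    by (auto simp: paths_between_def subset_iff)
  then have "set (zip (y # zs) zs) \<subseteq> interval_edges a n"
    using "3.IH"(2)[of y] interval_edges_mono[of a y n n] by auto
  moreover have "(x, y) \<in> interval_edges a n"
    using \<open>x = a\<close> \<open>a < y\<close> \<open>y \<le> n\<close> by (simp add: interval_edges_def)
  ultimately show ?case
    by simp
qed auto

lemma paths_between_map_add:
  "paths_between (a + c) (n + c) = map (\<lambda>v. v + c) ` paths_between a n"
proof
  show "map (\<lambda>v. v + c) ` paths_between a n \<subseteq> paths_between (a + c) (n + c)"
    by (auto simp: paths_between_def hd_map last_map sorted_wrt_map subset_iff)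
next
  show "paths_between (a + c) (n + c) \<subseteq> map (\<lambda>v. v + c) ` paths_between a n"
  proof
    fix xs assume xs: "xs \<in> paths_between (a + c) (n + c)"
    then have ge: "\<forall>v\<in>set xs. c \<le> v"
      by (auto simp: paths_between_def)
    then have xs_eq: "xs = map (\<lambda>v. v + c) (map (\<lambda>v. v - c) xs)"
      by (induction xs) auto
    have "sorted_wrt (<) (map (\<lambda>v. v - c) xs)"
      using xs ge unfolding sorted_wrt_map paths_between_def
      by (auto intro: sorted_wrt_mono_rel[of xs "(<)"] diff_less_mono)
    moreover have "hd xs \<ge> c" "last xs \<ge> c"
      using xs ge by (auto simp: paths_between_def)
    ultimately have "map (\<lambda>v. v - c) xs \<in> paths_between a n"
      using xs by (fastforce simp: paths_between_def hd_map last_map subset_iff)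
    with xs_eq show "xs \<in> map (\<lambda>v. v + c) ` paths_between a n"
      by blast
  qed
qed

lemma path_weight_le_max_weight_between:
  "xs \<in> paths_between a n \<Longrightarrow> path_weight w xs \<le> max_weight_between w a n"
  unfolding max_weight_between_def using finite_paths_between by (intro Max_ge) auto

lemma max_weight_between_attained:
  assumes "a \<le> n"
  obtains xs where "xs \<in> paths_between a n" "path_weight w xs = max_weight_between w a n"
proof -
  have "(if a = n then [a] else [a, n]) \<in> paths_between a n"
    using assms by (auto simp: paths_between_def)
  then have "max_weight_between w a n \<in> path_weight w ` paths_between a n"
    unfolding max_weight_between_def using finite_paths_between by (intro Max_in) auto
  then obtain xs where "xs \<in> paths_between a n" "max_weight_between w a n = path_weight w xs"
    by blast
  then show ?thesis
    using that by simp
qed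

lemma max_weight_between_le:
  assumes "a \<le> n" "\<And>xs. xs \<in> paths_between a n \<Longrightarrow> path_weight w xs \<le> B"
  shows "max_weight_between w a n \<le> B"
proof -
  obtain xs where "xs \<in> paths_between a n" "path_weight w xs = max_weight_between w a n"
    using max_weight_between_attained[OF assms(1)] .
  then show ?thesis
    using assms(2) by metis
qed

lemma max_weight_between_step:
  assumes "a < b" "b \<le> n"
  shows "of_bool (w (a, b)) + max_weight_between w b n \<le> max_weight_between w a n"
proof -
  obtain ys where ys: "ys \<in> paths_between b n" "path_weight w ys = max_weight_between w b n"
    using max_weight_between_attained assms(2) by blast
  then have "hd ys = b" "ys \<noteq> []"
    by (auto simp: paths_between_def)
  then have "path_weight w (a # ys) = of_bool (w (a, b)) + path_weight w ys"
    by (cases ys) auto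
  moreover have "a # ys \<in> paths_between a n"
    using ys(1) assms(1) by (rule Cons_in_paths_between)
  ultimately show ?thesis
    using ys(2) path_weight_le_max_weight_between[of "a # ys" a n w] by simp
qed

lemma max_weight_between_antimono:
  "a \<le> b \<Longrightarrow> b \<le> n \<Longrightarrow> max_weight_between w b n \<le> max_weight_between w a n"
  using max_weight_between_step[of a b n w] by (cases "a = b") auto

lemma max_weight_between_cong:
  assumes "\<And>e. e \<in> interval_edges a n \<Longrightarrow> w e = w' e"
  shows "max_weight_between w a n = max_weight_between w' a n"
proof -
  have "path_weight w xs = path_weight w' xs" if "xs \<in> paths_between a n" for xs
    using edges_subset_interval_edges[OF that] assms by (intro path_weight_cong) blast
  then show ?thesis
    unfolding max_weight_between_def by (auto intro!: arg_cong[where f = Max] image_cong)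
qed

lemma max_weight_between_add:
  "max_weight_between w (a + c) (n + c) = max_weight_between (\<lambda>(u, v). w (u + c, v + c)) a n"
  unfolding max_weight_between_def paths_between_map_add image_image path_weight_map_add ..

definition least_one_head :: "(nat \<times> nat \<Rightarrow> bool) \<Rightarrow> nat \<Rightarrow> bool" where
  "least_one_head w i \<longleftrightarrow> (\<forall>e\<in>tt_edges (i - 1). \<not> w e) \<and> (\<exists>e\<in>tt_edges i. w e)"

lemma least_one_head_unique:
  assumes "least_one_head w i" "least_one_head w j"
  shows "i = j"
proof -
  have False if "least_one_head w i" "least_one_head w j" "i < j" for i j
  proof -
    have "tt_edges i \<subseteq> tt_edges (j - 1)"
      using \<open>i < j\<close> by (simp add: tt_edges_eq_interval_edges interval_edges_mono)
    then show False
      using that(1,2) unfolding least_one_head_def by blast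
  qed
  then show ?thesis
    using assms by (cases i j rule: linorder_cases) auto
qed

lemma least_one_head_exists:
  assumes "\<exists>e\<in>tt_edges n. w e"
  shows "\<exists>i\<in>{2..n}. least_one_head w i"
proof -
  define P where "P i \<longleftrightarrow> (\<exists>e\<in>tt_edges i. w e)" for i
  define i where "i = (LEAST i. P i)"
  have "P n"
    using assms by (simp add: P_def)
  then have hit: "P i" and "i \<le> n"
    unfolding i_def by (rule LeastI, rule Least_le)
  then have "2 \<le> i"
    by (auto simp: P_def tt_edges_def)
  then have "\<not> P (i - 1)"
    unfolding i_def by (intro not_less_Least) (simp add: i_def)
  with hit \<open>2 \<le> i\<close> \<open>i \<le> n\<close> show ?thesis
    unfolding least_one_head_def P_def by auto
qed

lemma path_weight_le_of_zero_below:
  assumes "xs \<in> paths_between a n" "a < i" "i \<le> n"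
    and "\<forall>e\<in>interval_edges a (i - 1). \<not> w e"
  shows "path_weight w xs \<le> 1 + max_weight_between w i n"
  using assms
proof (induction xs arbitrary: a rule: induct_list012)
  case (3 x y zs)
  then have ys: "y # zs \<in> paths_between y n" and "x = a" "a < y"
    by (auto simp: paths_between_def subset_iff)
  show ?case
  proof (cases "y < i")
    case True
    then have "\<not> w (x, y)"
      using "3.prems"(4) \<open>x = a\<close> \<open>a < y\<close> by (simp add: interval_edges_def)
    moreover have "interval_edges y (i - 1) \<subseteq> interval_edges a (i - 1)"
      using \<open>a < y\<close> by (simp add: interval_edges_mono)
    then have "path_weight w (y # zs) \<le> 1 + max_weight_between w i n"
      using "3.IH"(2)[OF ys True "3.prems"(3)] "3.prems"(4) by blast
    ultimately show ?thesis
      by simp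
  next
    case False
    have "y \<le> n"
      using ys by (auto simp: paths_between_def)
    have "path_weight w (x # y # zs) \<le> 1 + path_weight w (y # zs)"
      by simp
    also have "\<dots> \<le> 1 + max_weight_between w y n"
      using ys by (simp add: path_weight_le_max_weight_between)
    also have "\<dots> \<le> 1 + max_weight_between w i n"
      using False \<open>y \<le> n\<close> by (simp add: max_weight_between_antimono)
    finally show ?thesis .
  qed
qed auto

lemma max_path_weight_least_one_head:
  assumes "least_one_head w i" "i \<le> n"
  shows "max_path_weight w n = 1 + max_weight_between w i n"
proof -
  obtain k j where kj: "(k, j) \<in> tt_edges i" "w (k, j)"
    using assms(1) unfolding least_one_head_def by auto
  moreover have "(k, j) \<notin> tt_edges (i - 1)"
    using kj assms(1) unfolding least_one_head_def by blast
  ultimately have "j = i" "1 \<le> k" "k < i"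
    by (auto simp: tt_edges_def)
  with kj have k: "1 \<le> k" "k < i" "w (k, i)"
    by auto
  have zero: "\<forall>e\<in>interval_edges 1 (i - 1). \<not> w e"
    using assms(1) by (simp add: least_one_head_def tt_edges_eq_interval_edges)
  have "max_weight_between w 1 n \<le> 1 + max_weight_between w i n"
  proof (rule max_weight_between_le)
    show "1 \<le> n"
      using k assms(2) by simp
    show "path_weight w xs \<le> 1 + max_weight_between w i n" if "xs \<in> paths_between 1 n" for xs
      using that k assms(2) zero by (intro path_weight_le_of_zero_below) auto
  qed
  moreover have "1 + max_weight_between w i n \<le> max_weight_between w k n"
    using max_weight_between_step[of k i n w] k assms(2) by simp
  moreover have "max_weight_between w k n \<le> max_weight_between w 1 n"
    using k assms(2) by (simp add: max_weight_between_antimono)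
  ultimately show ?thesis
    by (simp add: max_path_weight_eq_max_weight_between)
qed

lemma max_path_weight_eq_0:
  assumes "1 \<le> n" "\<forall>e\<in>tt_edges n. \<not> w e"
  shows "max_path_weight w n = 0"
proof -
  have "path_weight w xs = 0" if "xs \<in> paths_between 1 n" for xs
    using edges_subset_interval_edges[OF that] assms(2)
    by (intro path_weight_eq_0) (auto simp: tt_edges_eq_interval_edges)
  then have "max_weight_between w 1 n \<le> 0"
    using assms(1) by (intro max_weight_between_le) auto
  then show ?thesis
    by (simp add: max_path_weight_eq_max_weight_between)
qed

lemma max_path_weight_eq_sum_least_one_head:
  assumes "1 \<le> n"
  shows "real (max_path_weight w n) =
    (\<Sum>i = 2..n. of_bool (least_one_head w i) * (1 + real (max_weight_between w i n)))"
proof (cases "\<exists>e\<in>tt_edges n. w e")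
  case True
  then obtain i where i: "i \<in> {2..n}" "least_one_head w i"
    using least_one_head_exists by blast
  then have "least_one_head w j \<longleftrightarrow> j = i" for j
    using least_one_head_unique by blast
  then have "(\<Sum>j = 2..n. of_bool (least_one_head w j) * (1 + real (max_weight_between w j n))) =
      (\<Sum>j = 2..n. if j = i then 1 + real (max_weight_between w j n) else 0)"
    by (intro sum.cong) auto
  also have "\<dots> = real (max_path_weight w n)"
    using i by (simp add: sum.delta max_path_weight_least_one_head)
  finally show ?thesis ..
next
  case False
  have "\<not> least_one_head w i" if "i \<le> n" for i
    using False that interval_edges_mono[of 1 1 i n]
    unfolding least_one_head_def tt_edges_eq_interval_edges by blast
  then show ?thesis
    using False assms by (simp add: max_path_weight_eq_0)
qed

lemma finite_set_pmf_Pi_pmf: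
  fixes P :: "'a \<Rightarrow> 'b::finite pmf"
  assumes "finite A"
  shows "finite (set_pmf (Pi_pmf A d P))"
  by (rule finite_subset[OF set_Pi_pmf_subset'[OF assms]]) (use assms in auto)

lemma expectation_pair_pmf_mult:
  fixes g :: "'a \<Rightarrow> real" and h :: "'b \<Rightarrow> real"
  assumes "finite (set_pmf M)" "finite (set_pmf N)"
  shows "measure_pmf.expectation (pair_pmf M N) (\<lambda>(x, y). g x * h y) =
    measure_pmf.expectation M g * measure_pmf.expectation N h"
proof -
  have "measure_pmf.expectation (pair_pmf M N) (\<lambda>(x, y). g x * h y) =
      (\<Sum>(x, y)\<in>set_pmf M \<times> set_pmf N. g x * h y * pmf (pair_pmf M N) (x, y))"
    using assms by (subst integral_measure_pmf_real[of "set_pmf M \<times> set_pmf N"])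
      (auto simp: case_prod_beta)
  also have "\<dots> = (\<Sum>x\<in>set_pmf M. \<Sum>y\<in>set_pmf N. (g x * pmf M x) * (h y * pmf N y))"
    by (simp add: sum.cartesian_product pmf_pair mult_ac)
  also have "\<dots> = measure_pmf.expectation M g * measure_pmf.expectation N h"
    using assms by (simp add: integral_measure_pmf_real sum_product)
  finally show ?thesis .
qed

lemma expectation_Pi_pmf_restrict:
  fixes h :: "('a \<Rightarrow> 'b) \<Rightarrow> real"
  assumes "finite A" "B \<subseteq> A" "\<And>w w'. \<forall>x\<in>B. w x = w' x \<Longrightarrow> h w = h w'"
  shows "measure_pmf.expectation (Pi_pmf A d P) h = measure_pmf.expectation (Pi_pmf B d P) h"
proof -
  have "measure_pmf.expectation (Pi_pmf B d P) h =
      measure_pmf.expectation (Pi_pmf A d P) (\<lambda>w. h (\<lambda>x. if x \<in> B then w x else d))"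
    using assms(1,2) by (simp add: Pi_pmf_subset[of A B])
  also have "\<dots> = measure_pmf.expectation (Pi_pmf A d P) h"
    using assms(3) by (intro Bochner_Integration.integral_cong) auto
  finally show ?thesis ..
qed

lemma expectation_Pi_pmf_mult_disjoint:
  fixes g h :: "('a \<Rightarrow> 'b::finite) \<Rightarrow> real"
  assumes "finite C" "A \<subseteq> C" "B \<subseteq> C" "A \<inter> B = {}"
    and g: "\<And>w w'. \<forall>x\<in>A. w x = w' x \<Longrightarrow> g w = g w'"
    and h: "\<And>w w'. \<forall>x\<in>B. w x = w' x \<Longrightarrow> h w = h w'"
  shows "measure_pmf.expectation (Pi_pmf C d P) (\<lambda>w. g w * h w) =
    measure_pmf.expectation (Pi_pmf A d P) g * measure_pmf.expectation (Pi_pmf B d P) h"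
proof -
  have fin: "finite A" "finite B"
    using assms(1-3) finite_subset by blast+
  define merge :: "('a \<Rightarrow> 'b) \<times> ('a \<Rightarrow> 'b) \<Rightarrow> 'a \<Rightarrow> 'b" where
    "merge = (\<lambda>(u, v) x. if x \<in> A then u x else v x)"
  have "measure_pmf.expectation (Pi_pmf C d P) (\<lambda>w. g w * h w) =
      measure_pmf.expectation (Pi_pmf (A \<union> B) d P) (\<lambda>w. g w * h w)"
  proof (rule expectation_Pi_pmf_restrict)
    show "g w * h w = g w' * h w'" if "\<forall>x\<in>A \<union> B. w x = w' x" for w w'
      using that g[of w w'] h[of w w'] by simp
  qed (use assms(1-3) in auto)
  also have "\<dots> = measure_pmf.expectation (pair_pmf (Pi_pmf A d P) (Pi_pmf B d P))
      (\<lambda>z. g (merge z) * h (merge z))"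
    using fin assms(4) by (simp add: Pi_pmf_union merge_def)
  also have "\<dots> = measure_pmf.expectation (pair_pmf (Pi_pmf A d P) (Pi_pmf B d P))
      (\<lambda>(u, v). g u * h v)"
  proof (intro Bochner_Integration.integral_cong refl)
    fix z :: "('a \<Rightarrow> 'b) \<times> ('a \<Rightarrow> 'b)"
    show "g (merge z) * h (merge z) = (\<lambda>(u, v). g u * h v) z"
      using assms(4) by (cases z) (auto simp: merge_def intro!: arg_cong2[where f = times] g h)
  qed
  also have "\<dots> = measure_pmf.expectation (Pi_pmf A d P) g * measure_pmf.expectation (Pi_pmf B d P) h"
    using fin by (intro expectation_pair_pmf_mult finite_set_pmf_Pi_pmf)
  finally show ?thesis .
qed

lemma expectation_Pi_pmf_bernoulli_all_False:
  assumes "finite A" "S \<subseteq> A" "0 \<le> p" "p \<le> 1"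
  shows "measure_pmf.expectation (Pi_pmf A False (\<lambda>_. bernoulli_pmf p))
      (\<lambda>w. of_bool (\<forall>x\<in>S. \<not> w x)) = (1 - p) ^ card S"
proof -
  define f :: "'a \<Rightarrow> bool \<Rightarrow> real" where "f x b = of_bool (x \<notin> S \<or> \<not> b)" for x b
  have "(\<lambda>w. of_bool (\<forall>x\<in>S. \<not> w x)) = (\<lambda>w. \<Prod>x\<in>A. f x (w x))"
    using assms(1,2) by (auto simp: f_def fun_eq_iff prod_zero_iff intro!: prod.neutral)
  then have "measure_pmf.expectation (Pi_pmf A False (\<lambda>_. bernoulli_pmf p))
      (\<lambda>w. of_bool (\<forall>x\<in>S. \<not> w x)) =
      measure_pmf.expectation (Pi_pmf A False (\<lambda>_. bernoulli_pmf p)) (\<lambda>w. \<Prod>x\<in>A. f x (w x))"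
    by simp
  also have "\<dots> = (\<Prod>x\<in>A. measure_pmf.expectation (bernoulli_pmf p) (f x))"
    using assms(1) by (rule expectation_prod_Pi_pmf) (auto simp: f_def integrable_measure_pmf_finite)
  also have "\<dots> = (\<Prod>x\<in>A. if x \<in> S then 1 - p else 1)"
    using assms(3,4) by (intro prod.cong) (auto simp: f_def)
  also have "\<dots> = (1 - p) ^ card S"
    using assms(1,2) by (simp add: prod.If_cases Int_absorb1)
  finally show ?thesis .
qed

lemma card_tt_edges: "card (tt_edges k) = k choose 2"
proof (induction k)
  case 0
  have "tt_edges 0 = {}"
    by (auto simp: tt_edges_def)
  then show ?case
    by simp
next
  case (Suc k)
  have "tt_edges (Suc k) = tt_edges k \<union> (\<lambda>u. (u, Suc k)) ` {1..k}"
    by (auto simp: tt_edges_def)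
  moreover have "tt_edges k \<inter> (\<lambda>u. (u, Suc k)) ` {1..k} = {}"
    by (auto simp: tt_edges_def)
  ultimately have "card (tt_edges (Suc k)) = card (tt_edges k) + k"
    by (simp add: card_Un_disjoint card_image inj_on_def)
  with Suc show ?case
    by (simp add: numeral_2_eq_2)
qed

lemma expectation_least_one_head:
  assumes "0 \<le> p" "p \<le> 1"
  shows "measure_pmf.expectation (Pi_pmf (tt_edges i) False (\<lambda>_. bernoulli_pmf p))
      (\<lambda>w. of_bool (least_one_head w i)) = (1 - (1 - p) ^ (i - 1)) * (1 - p) ^ ((i - 1) choose 2)"
proof -
  let ?M = "Pi_pmf (tt_edges i) False (\<lambda>_. bernoulli_pmf p)"
  have sub: "tt_edges (i - 1) \<subseteq> tt_edges i"
    by (simp add: tt_edges_eq_interval_edges interval_edges_mono)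
  have fin: "finite (set_pmf ?M)"
    by (simp add: finite_set_pmf_Pi_pmf)
  have "measure_pmf.expectation ?M (\<lambda>w. of_bool (least_one_head w i) :: real) =
      measure_pmf.expectation ?M
        (\<lambda>w. of_bool (\<forall>e\<in>tt_edges (i - 1). \<not> w e) - of_bool (\<forall>e\<in>tt_edges i. \<not> w e))"
    using sub by (intro Bochner_Integration.integral_cong) (auto simp: least_one_head_def)
  also have "\<dots> = measure_pmf.expectation ?M (\<lambda>w. of_bool (\<forall>e\<in>tt_edges (i - 1). \<not> w e)) -
      measure_pmf.expectation ?M (\<lambda>w. of_bool (\<forall>e\<in>tt_edges i. \<not> w e))"
    by (rule Bochner_Integration.integral_diff) (simp_all add: integrable_measure_pmf_finite[OF fin])
  also have "\<dots> = (1 - p) ^ ((i - 1) choose 2) - (1 - p) ^ (i choose 2)"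
    using sub assms by (simp add: expectation_Pi_pmf_bernoulli_all_False card_tt_edges)
  also have "\<dots> = (1 - (1 - p) ^ (i - 1)) * (1 - p) ^ ((i - 1) choose 2)"
    by (cases i) (simp_all add: numeral_2_eq_2 power_add algebra_simps)
  finally show ?thesis .
qed

lemma expectation_max_weight_between_shift:
  "measure_pmf.expectation (Pi_pmf (interval_edges (a + c) (n + c)) d (\<lambda>_. P))
      (\<lambda>w. real (max_weight_between w (a + c) (n + c))) =
    measure_pmf.expectation (Pi_pmf (interval_edges a n) d (\<lambda>_. P))
      (\<lambda>w. real (max_weight_between w a n))"
proof -
  define s :: "nat \<times> nat \<Rightarrow> nat \<times> nat" where "s = (\<lambda>(u, v). (u + c, v + c))"
  have "bij_betw s (interval_edges a n) (interval_edges (a + c) (n + c))"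
    by (rule bij_betw_byWitness[where f' = "\<lambda>(u, v). (u - c, v - c)"])
      (auto simp: s_def interval_edges_def image_iff intro!: exI[where x = "_ - c"])
  moreover have "s x \<notin> interval_edges (a + c) (n + c)" if "x \<notin> interval_edges a n" for x
    using that by (cases x) (auto simp: s_def interval_edges_def)
  ultimately have "Pi_pmf (interval_edges a n) d (\<lambda>_. P) =
      map_pmf (\<lambda>g. g \<circ> s) (Pi_pmf (interval_edges (a + c) (n + c)) d (\<lambda>_. P))"
    by (intro Pi_pmf_bij_betw) auto
  moreover have "max_weight_between (g \<circ> s) a n = max_weight_between g (a + c) (n + c)" for g
    by (simp add: max_weight_between_add s_def comp_def case_prod_unfold)
  ultimately show ?thesis
    by simp
qed

lemma expectation_max_weight_between_eq_f_exp:
  assumes "1 \<le> i" "i \<le> n"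
  shows "measure_pmf.expectation (Pi_pmf (interval_edges i n) False (\<lambda>_. bernoulli_pmf p))
      (\<lambda>w. real (max_weight_between w i n)) = f_exp p (n - i + 1)"
proof -
  define c where "c = i - 1"
  define m where "m = n - i + 1"
  have "i = 1 + c" "n = m + c" "1 \<le> m"
    using assms by (simp_all add: c_def m_def)
  then show ?thesis
    using expectation_max_weight_between_shift[of 1 c m False "bernoulli_pmf p"]
    by (simp add: f_exp_def weight_pmf_def tt_edges_eq_interval_edges
        max_path_weight_eq_max_weight_between flip: m_def)
qed

lemma expectation_least_one_head_times_weight:
  assumes "0 \<le> p" "p \<le> 1" "1 \<le> i" "i \<le> n"
  shows "measure_pmf.expectation (Pi_pmf (tt_edges n) False (\<lambda>_. bernoulli_pmf p))
      (\<lambda>w. of_bool (least_one_head w i) * (1 + real (max_weight_between w i n))) =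
    (1 - (1 - p) ^ (i - 1)) * (1 - p) ^ ((i - 1) choose 2) * (f_exp p (n - i + 1) + 1)"
proof -
  let ?M = "\<lambda>A. Pi_pmf A False (\<lambda>_. bernoulli_pmf p)"
  have "measure_pmf.expectation (?M (tt_edges n))
      (\<lambda>w. of_bool (least_one_head w i) * (1 + real (max_weight_between w i n))) =
    measure_pmf.expectation (?M (tt_edges i)) (\<lambda>w. of_bool (least_one_head w i)) *
    measure_pmf.expectation (?M (interval_edges i n)) (\<lambda>w. 1 + real (max_weight_between w i n))"
  proof (rule expectation_Pi_pmf_mult_disjoint)
    show "finite (tt_edges n)"
      by simp
    show "tt_edges i \<subseteq> tt_edges n" "interval_edges i n \<subseteq> tt_edges n"
      using assms by (simp_all add: tt_edges_eq_interval_edges interval_edges_mono)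
    show "tt_edges i \<inter> interval_edges i n = {}"
      by (auto simp: tt_edges_def interval_edges_def)
    show "of_bool (least_one_head w i) = (of_bool (least_one_head w' i) :: real)"
      if "\<forall>x\<in>tt_edges i. w x = w' x" for w w'
    proof -
      have "tt_edges (i - 1) \<subseteq> tt_edges i"
        by (simp add: tt_edges_eq_interval_edges interval_edges_mono)
      then have "least_one_head w i \<longleftrightarrow> least_one_head w' i"
        using that unfolding least_one_head_def by blast
      then show ?thesis
        by simp
    qed
    show "1 + real (max_weight_between w i n) = 1 + real (max_weight_between w' i n)"
      if "\<forall>x\<in>interval_edges i n. w x = w' x" for w w'
    proof -
      have "max_weight_between w i n = max_weight_between w' i n"
        using that by (intro max_weight_between_cong) blast
      then show ?thesis
        by simp
    qed
  qed
  also have "measure_pmf.expectation (?M (tt_edges i)) (\<lambda>w. of_bool (least_one_head w i)) =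
      (1 - (1 - p) ^ (i - 1)) * (1 - p) ^ ((i - 1) choose 2)"
    using assms(1,2) by (rule expectation_least_one_head)
  also have "measure_pmf.expectation (?M (interval_edges i n))
      (\<lambda>w. 1 + real (max_weight_between w i n)) =
    1 + measure_pmf.expectation (?M (interval_edges i n)) (\<lambda>w. real (max_weight_between w i n))"
    by (subst Bochner_Integration.integral_add)
      (simp_all add: integrable_measure_pmf_finite finite_set_pmf_Pi_pmf)
  also have "\<dots> = 1 + f_exp p (n - i + 1)"
    using assms(3,4) by (simp add: expectation_max_weight_between_eq_f_exp)
  finally show ?thesis
    by simp
qed

theorem lemma9:
  fixes p :: real and n :: nat
  assumes "0 < p" and "p < 1" and "1 \<le> n"
  shows "f_exp p n = (\<Sum>i = 2..n. (1 - (1 - p) ^ (i - 1)) * (1 - p) ^ ((i - 1) choose 2)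
                                  * (f_exp p (n - i + 1) + 1))"
proof -
  let ?M = "Pi_pmf (tt_edges n) False (\<lambda>_. bernoulli_pmf p)"
  have "f_exp p n = measure_pmf.expectation ?M (\<lambda>w. real (max_path_weight w n))"
    using assms(3) by (simp add: f_exp_def weight_pmf_def)
  also have "\<dots> = measure_pmf.expectation ?M
      (\<lambda>w. \<Sum>i = 2..n. of_bool (least_one_head w i) * (1 + real (max_weight_between w i n)))"
    using assms(3) by (simp add: max_path_weight_eq_sum_least_one_head)
  also have "\<dots> = (\<Sum>i = 2..n. measure_pmf.expectation ?M
      (\<lambda>w. of_bool (least_one_head w i) * (1 + real (max_weight_between w i n))))"
    by (intro Bochner_Integration.integral_sum integrable_measure_pmf_finite finite_set_pmf_Pi_pmf)
      simp
  also have "\<dots> = (\<Sum>i = 2..n. (1 - (1 - p) ^ (i - 1)) * (1 - p) ^ ((i - 1) choose 2)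
      * (f_exp p (n - i + 1) + 1))"
    using assms by (intro sum.cong refl expectation_least_one_head_times_weight) auto
  finally show ?thesis .
qed

end
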